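(* Let $f:\mathbb{R}^n\to\mathbb{R}$ be bounded below by $f_{\mathrm{low}}$ and twice continuously differentiable with $\nabla^2 f$ Lipschitz continuous with constant $L_{\nabla^2 f}$. Run the algorithm described in the context, and suppose that (i) at every iteration $k$ the model $m_k$ is fully quadratic in $B(x_k,\Delta_k)$ with constants $\kappa_{\mathrm{mf}},\kappa_{\mathrm{mg}},\kappa_{\mathrm{mh}}>0$ independent of $k$, and $\|H_k\|\le\kappa_H-1$ for some $\kappa_H\ge1$ independent of $k$; (ii) at every iteration the step satisfies $\|s_k\|\le\Delta_k$ and $$m_k(x_k)-m_k(x_k+s_k)\ge\kappa_s\max\left(\|g_k\|\min\left(\Delta_k,\frac{\|g_k\|}{\|H_k\|+1}\right),\ \tau^m_k\Delta_k^2\right)$$ for some $\kappa_s\in(0,\tfrac12)$. Let $\epsilon>0$. If $\sigma_k\ge\epsilon$ for all $k=0,\ldots,K-1$, then $$K\le\frac{\log(\Delta_0/\Delta_{\min}(\epsilon))}{\log(\gamma_{\mathrm{dec}}^{-1})}+\left(1+\frac{\log(\gamma_{\mathrm{inc}})}{\log(\gamma_{\mathrm{dec}}^{-1})}\right)\frac{(1+\kappa_\sigma\mu_c^{-1})[f(x_0)-f_{\mathrm{low}}]}{\eta_U\kappa_s\min(\epsilon\Delta_{\min}(\epsilon),\epsilon\Delta_{\min}(\epsilon)^2)},$$ where $\kappa_\sigma:=\max(\kappa_{\mathrm{mg}}\Delta_{\max},\kappa_{\mathrm{mh}})$ and $$\Delta_{\min}(\epsilon):=\min\left(\Delta_0,\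 \frac{\gamma_{\mathrm{dec}}\epsilon}{\max\left(\frac{2\kappa_{\mathrm{mf}}\Delta_{\max}}{\kappa_s(1-\eta_S)},\kappa_H,\mu_c\right)+\kappa_\sigma},\ \frac{\gamma_{\mathrm{dec}}\epsilon}{\max\left(\frac{2\kappa_{\mathrm{mf}}}{\kappa_s(1-\eta_S)},\mu_c\right)+\kappa_\sigma},\ \frac{\epsilon}{(1+\kappa_\sigma\mu_c^{-1})\kappa_H}\right).$$
   Context: Norms are Euclidean (operator 2-norm for matrices); $B(x,\Delta)=\{y:\|y-x\|\le\Delta\}$. A model $m$ is fully quadratic in $B(x,\Delta)$ with constants $\kappa_{\mathrm{mf}},\kappa_{\mathrm{mg}},\kappa_{\mathrm{mh}}>0$ if for all $y\in B(x,\Delta)$: $|m(y)-f(y)|\le\kappa_{\mathrm{mf}}\Delta^3$, $\|\nabla m(y)-\nabla f(y)\|\le\kappa_{\mathrm{mg}}\Delta^2$, $\|\nabla^2 m(y)-\nabla^2 f(y)\|\le\kappa_{\mathrm{mh}}\Delta$. Notation: $\tau_k:=\max(-\lambda_{\min}(\nabla^2 f(x_k)),0)$, $\sigma_k:=\max(\|\nabla f(x_k)\|,\tau_k)$, $\tau^m_k:=\max(-\lambda_{\min}(H_k),0)$, $\sigma^m_k:=\max(\|g_k\|,\tau^m_k)$. Algorithm: inputs $x_0\in\mathbb{R}^n$, $\Delta_0>0$, parameters $\Delta_{\max}\ge\Delta_0$, $0<\gamma_{\mathrm{dec}}<1<\gamma_{\mathrm{inc}}$, $0<\eta_U\le\eta_S<1$,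 $\mu_c>0$. For $k=0,1,\ldots$: build a quadratic model $m_k(y)=c_k+g_k^T(y-x_k)+\tfrac12(y-x_k)^TH_k(y-x_k)$ ($H_k$ symmetric); compute a step $s_k$; evaluate $f(x_k+s_k)$ and $\rho_k=\frac{f(x_k)-f(x_k+s_k)}{m_k(x_k)-m_k(x_k+s_k)}$. If $\rho_k\ge\eta_S$ and $\sigma^m_k\ge\mu_c\Delta_k$: $x_{k+1}=x_k+s_k$, $\Delta_{k+1}=\min(\gamma_{\mathrm{inc}}\Delta_k,\Delta_{\max})$. Else if $\eta_U\le\rho_k<\eta_S$ and $\sigma^m_k\ge\mu_c\Delta_k$: $x_{k+1}=x_k+s_k$, $\Delta_{k+1}=\Delta_k$. Otherwise: $x_{k+1}=x_k$, $\Delta_{k+1}=\gamma_{\mathrm{dec}}\Delta_k$. *)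

theory Defs
  imports "HOL-Analysis.Analysis"
begin

definition opnorm :: "real^'n^'m \<Rightarrow> real" where
  "opnorm A = onorm (\<lambda>v. A *v v)"

definition lambda_min :: "real^'n^'n \<Rightarrow> real" where
  "lambda_min A = Min {lam. \<exists>v. v \<noteq> 0 \<and> A *v v = lam *\<^sub>R v}"

definition fully_quadratic ::
  "(real^'n \<Rightarrow> real) \<Rightarrow> (real^'n \<Rightarrow> real^'n) \<Rightarrow> (real^'n \<Rightarrow> real^'n^'n) \<Rightarrow>
   (real^'n \<Rightarrow> real) \<Rightarrow> (real^'n \<Rightarrow> real^'n) \<Rightarrow> (real^'n \<Rightarrow> real^'n^'n) \<Rightarrow>
   real^'n \<Rightarrow> real \<Rightarrow> real \<Rightarrow> real \<Rightarrow> real \<Rightarrow> bool" where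
  "fully_quadratic m gm hm f gf hf x Delta kmf kmg kmh \<longleftrightarrow>
     (\<forall>y \<in> cball x Delta.
        \<bar>m y - f y\<bar> \<le> kmf * Delta ^ 3 \<and>
        norm (gm y - gf y) \<le> kmg * Delta ^ 2 \<and>
        opnorm (hm y - hf y) \<le> kmh * Delta)"

end

(*
  A fully quadratic model predicts the decrease of f up to O(Delta^3), while the step decreases
  the model by at least a multiple of sigma^m Delta or sigma^m Delta^2. Hence, as long as
  sigma_k >= eps, every iteration whose radius is below a fixed multiple of eps is very
  successful, and the radius never drops below Delta_min(eps). On a successful iteration the
  model criticality is at least eps / (1 + kappa_sigma / mu_c), so f decreases by a fixed
  amount; this bounds the number of successful iterations by f(x_0) - f_low. Each unsuccessful
  iteration shrinks the radius by gamma_dec and each successful one enlarges it by at most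
  gamma_inc, so the radius bound turns this into a bound on the unsuccessful iterations.
  Comparing lambda_min of H_k and of the Hessian needs the Hessian to be symmetric, which
  follows from its Lipschitz continuity.
*)
theory Submission
  imports Defs
begin

section \<open>Symmetric matrices and their smallest eigenvalue\<close>

lemma norm_matrix_vector_mult_le_opnorm: "norm (A *v x) \<le> opnorm A * norm x"
  unfolding opnorm_def by (rule onorm) (rule matrix_vector_mul_bounded_linear)

lemma opnorm_nonneg: "0 \<le> opnorm A"
  unfolding opnorm_def by (rule onorm_pos_le) (rule matrix_vector_mul_bounded_linear)

lemma abs_inner_matrix_vector_mult_le_opnorm:
  "\<bar>u \<bullet> (A *v v)\<bar> \<le> opnorm A * norm u * norm v"
proof -
  have "\<bar>u \<bullet> (A *v v)\<bar> \<le> norm u * norm (A *v v)"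
    by (rule Cauchy_Schwarz_ineq2)
  also have "\<dots> \<le> norm u * (opnorm A * norm v)"
    by (intro mult_left_mono norm_matrix_vector_mult_le_opnorm) simp
  finally show ?thesis
    by (simp add: ac_simps)
qed

lemma inner_matrix_vector_mult_commute:
  fixes A :: "real^'n^'n"
  assumes "transpose A = A"
  shows "u \<bullet> (A *v v) = v \<bullet> (A *v u)"
proof -
  have "u \<bullet> (A *v v) = (u v* A) \<bullet> v"
    by (simp add: dot_lmul_matrix)
  also have "u v* A = A *v u"
    by (metis assms vector_transpose_matrix)
  finally show ?thesis
    by (simp add: inner_commute)
qed

lemma symmetric_if_inner_matrix_vector_mult_commute:
  fixes A :: "real^'n^'n"
  assumes "\<And>u v. u \<bullet> (A *v v) = v \<bullet> (A *v u)"
  shows "transpose A = A"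
proof -
  have "A $ i $ j = A $ j $ i" for i j
    using assms[of "axis i 1" "axis j 1"]
    by (simp add: inner_axis' matrix_vector_mult_basis column_def)
  then show ?thesis
    by (simp add: vec_eq_iff transpose_def)
qed

lemma linear_coeff_eq_0_if_quadratic_nonneg:
  fixes a b :: real
  assumes "\<And>t. 0 \<le> 2 * t * b + t\<^sup>2 * a"
  shows "b = 0"
proof (rule ccontr)
  assume b: "b \<noteq> 0"
  define e where "e = 1 / (\<bar>a\<bar> + 1)"
  have e: "e > 0" "e * a \<le> 1"
    unfolding e_def by (auto simp: field_simps)
  have "2 * (- b * e) * b + (- b * e)\<^sup>2 * a = b\<^sup>2 * e * (e * a - 2)"
    by (simp add: power2_eq_square algebra_simps)
  also have "\<dots> < 0"
    using b e by (intro mult_pos_neg) auto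
  finally show False
    using assms[of "- b * e"] by linarith
qed

text \<open>Perturbing \<open>v\<close> along \<open>w\<close> gives a nonnegative quadratic in the step length whose
  linear coefficient is \<open>w \<bullet> (A v - q v)\<close>.\<close>
lemma eigenvector_if_minimises_quadratic_form:
  fixes A :: "real^'n^'n"
  assumes sym: "transpose A = A"
    and ge: "\<And>x. q * (norm x)\<^sup>2 \<le> x \<bullet> (A *v x)"
    and eq: "v \<bullet> (A *v v) = q * (norm v)\<^sup>2"
  shows "A *v v = q *\<^sub>R v"
proof -
  have "w \<bullet> (A *v v - q *\<^sub>R v) = 0" for w
  proof (rule linear_coeff_eq_0_if_quadratic_nonneg)
    fix t :: real
    have "q * (norm (v + t *\<^sub>R w))\<^sup>2 \<le> (v + t *\<^sub>R w) \<bullet> (A *v (v + t *\<^sub>R w))"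
      by (rule ge)
    moreover have "(norm (v + t *\<^sub>R w))\<^sup>2 = (norm v)\<^sup>2 + 2 * t * (v \<bullet> w) + t\<^sup>2 * (w \<bullet> w)"
      by (simp only: power2_norm_eq_inner)
        (simp add: inner_add_left inner_add_right inner_commute[of w v] power2_eq_square algebra_simps)
    moreover have "(v + t *\<^sub>R w) \<bullet> (A *v (v + t *\<^sub>R w))
        = v \<bullet> (A *v v) + 2 * t * (w \<bullet> (A *v v)) + t\<^sup>2 * (w \<bullet> (A *v w))"
      using inner_matrix_vector_mult_commute[OF sym, of v w]
      by (simp add: matrix_vector_right_distrib matrix_vector_mult_scaleR inner_add_left
          inner_add_right power2_eq_square algebra_simps)
    ultimately show "0 \<le> 2 * t * (w \<bullet> (A *v v - q *\<^sub>R v)) + t\<^sup>2 * (w \<bullet> (A *v w) - q * (w \<bullet> w))"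
      using eq by (simp add: inner_diff_right inner_commute[of w v] algebra_simps)
  qed
  from this[of "A *v v - q *\<^sub>R v"] show ?thesis
    by simp
qed

lemma rayleigh_minimum_exists:
  fixes A :: "real^'n^'n"
  assumes "transpose A = A"
  obtains q v where "v \<noteq> 0" "A *v v = q *\<^sub>R v" "\<And>x. q * (norm x)\<^sup>2 \<le> x \<bullet> (A *v x)"
proof -
  obtain i :: 'n where True by blast
  have "axis i (1::real) \<in> sphere 0 1"
    by (simp add: norm_eq_1 inner_axis_axis)
  then have ne: "sphere (0::real^'n) 1 \<noteq> {}"
    by blast
  have "continuous_on (sphere 0 1) (\<lambda>x. x \<bullet> (A *v x))"
    by (intro continuous_intros linear_continuous_on matrix_vector_mul_bounded_linear)
  then obtain v where v: "v \<in> sphere 0 1"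
    and vmin: "\<And>y. y \<in> sphere 0 1 \<Longrightarrow> v \<bullet> (A *v v) \<le> y \<bullet> (A *v y)"
    using continuous_attains_inf[OF compact_sphere ne] by blast
  define q where "q = v \<bullet> (A *v v)"
  have ge: "q * (norm x)\<^sup>2 \<le> x \<bullet> (A *v x)" for x
  proof (cases "x = 0")
    case False
    define w where "w = x /\<^sub>R norm x"
    have "w \<in> sphere 0 1"
      using False by (simp add: w_def)
    then have "q \<le> w \<bullet> (A *v w)"
      using vmin q_def by blast
    also have "\<dots> = (x \<bullet> (A *v x)) / (norm x)\<^sup>2"
      by (simp add: w_def matrix_vector_mult_scaleR power2_eq_square divide_inverse)
    finally show ?thesis
      using False by (simp add: field_simps)
  qed simp
  have "norm v = 1"
    using v by simp
  then have "A *v v = q *\<^sub>R v"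
    by (intro eigenvector_if_minimises_quadratic_form[OF assms ge]) (simp add: q_def)
  moreover have "v \<noteq> 0"
    using \<open>norm v = 1\<close> by auto
  ultimately show ?thesis
    using that ge by blast
qed

lemma finite_eigenvalues_if_symmetric:
  fixes A :: "real^'n^'n"
  assumes sym: "transpose A = A"
  shows "finite {lam. \<exists>v. v \<noteq> 0 \<and> A *v v = lam *\<^sub>R v}" (is "finite ?E")
proof -
  define e where "e lam = (SOME v. v \<noteq> 0 \<and> A *v v = lam *\<^sub>R v)" for lam
  have e: "e lam \<noteq> 0 \<and> A *v e lam = lam *\<^sub>R e lam" if "lam \<in> ?E" for lam
    unfolding e_def by (rule someI_ex) (use that in simp)
  have "inj_on e ?E"
  proof (rule inj_onI)
    fix l1 l2 assume l: "l1 \<in> ?E" "l2 \<in> ?E" and "e l1 = e l2"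
    have "l1 *\<^sub>R e l1 = A *v e l2"
      using conjunct2[OF e[OF l(1)]] \<open>e l1 = e l2\<close> by simp
    also have "\<dots> = l2 *\<^sub>R e l1"
      using conjunct2[OF e[OF l(2)]] \<open>e l1 = e l2\<close> by simp
    finally have "l1 *\<^sub>R e l1 = l2 *\<^sub>R e l1" .
    then show "l1 = l2"
      using conjunct1[OF e[OF l(1)]] by simp
  qed
  moreover have "pairwise orthogonal (e ` ?E)"
  proof (rule pairwiseI)
    fix x y assume "x \<in> e ` ?E" "y \<in> e ` ?E" and "x \<noteq> y"
    then obtain l1 l2 where l: "l1 \<in> ?E" "l2 \<in> ?E" and xy: "x = e l1" "y = e l2"
      by blast
    then have "l1 \<noteq> l2"
      using \<open>x \<noteq> y\<close> by blast
    have "l1 * (e l1 \<bullet> e l2) = e l2 \<bullet> (A *v e l1)"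
      using conjunct2[OF e[OF l(1)]] by (simp add: inner_commute)
    also have "\<dots> = e l1 \<bullet> (A *v e l2)"
      by (rule inner_matrix_vector_mult_commute[OF sym])
    also have "\<dots> = l2 * (e l1 \<bullet> e l2)"
      using conjunct2[OF e[OF l(2)]] by simp
    finally show "orthogonal x y"
      using \<open>l1 \<noteq> l2\<close> xy by (simp add: orthogonal_def)
  qed
  then have "finite (e ` ?E)"
    by (rule pairwise_orthogonal_imp_finite)
  ultimately show ?thesis
    using finite_imageD by blast
qed

lemma lambda_min_eqI:
  fixes A :: "real^'n^'n"
  assumes sym: "transpose A = A"
    and eigen: "v \<noteq> 0" "A *v v = q *\<^sub>R v"
    and ge: "\<And>x. q * (norm x)\<^sup>2 \<le> x \<bullet> (A *v x)"
  shows "lambda_min A = q"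
  unfolding lambda_min_def
proof (rule Min_eqI[OF finite_eigenvalues_if_symmetric[OF sym]])
  fix lam assume "lam \<in> {lam. \<exists>v. v \<noteq> 0 \<and> A *v v = lam *\<^sub>R v}"
  then obtain u where "u \<noteq> 0" "A *v u = lam *\<^sub>R u"
    by blast
  with ge[of u] show "q \<le> lam"
    by (simp add: power2_norm_eq_inner)
qed (use eigen in blast)

lemma lambda_min_le_quadratic_form:
  fixes A :: "real^'n^'n"
  assumes "transpose A = A"
  shows "lambda_min A * (norm x)\<^sup>2 \<le> x \<bullet> (A *v x)"
proof -
  obtain q v where "v \<noteq> 0" "A *v v = q *\<^sub>R v" and ge: "\<And>x. q * (norm x)\<^sup>2 \<le> x \<bullet> (A *v x)"
    using rayleigh_minimum_exists[OF assms] by blast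
  then have "lambda_min A = q"
    by (intro lambda_min_eqI[OF assms])
  with ge show ?thesis
    by simp
qed

lemma lambda_min_eigenvector:
  fixes A :: "real^'n^'n"
  assumes "transpose A = A"
  obtains v where "v \<noteq> 0" "A *v v = lambda_min A *\<^sub>R v"
proof -
  obtain q v where "v \<noteq> 0" "A *v v = q *\<^sub>R v" and ge: "\<And>x. q * (norm x)\<^sup>2 \<le> x \<bullet> (A *v x)"
    using rayleigh_minimum_exists[OF assms] by blast
  moreover from this ge have "lambda_min A = q"
    by (intro lambda_min_eqI[OF assms])
  ultimately show thesis
    using that by simp
qed

lemma lambda_min_le_perturbation:
  fixes A B :: "real^'n^'n"
  assumes "transpose A = A" "transpose B = B"
  shows "lambda_min A \<le> lambda_min B + opnorm (A - B)"
proof -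
  obtain v where v: "v \<noteq> 0" "B *v v = lambda_min B *\<^sub>R v"
    using lambda_min_eigenvector[OF assms(2)] by blast
  have "v \<bullet> (B *v v) = lambda_min B * (norm v)\<^sup>2"
    using v by (simp add: power2_norm_eq_inner)
  moreover have "v \<bullet> ((A - B) *v v) \<le> opnorm (A - B) * (norm v)\<^sup>2"
    using abs_inner_matrix_vector_mult_le_opnorm[of v "A - B" v]
    by (simp add: power2_eq_square abs_le_iff)
  moreover have "v \<bullet> (A *v v) = v \<bullet> (B *v v) + v \<bullet> ((A - B) *v v)"
    by (simp add: matrix_vector_mult_diff_rdistrib inner_diff_right)
  ultimately have "lambda_min A * (norm v)\<^sup>2 \<le> (lambda_min B + opnorm (A - B)) * (norm v)\<^sup>2"
    using lambda_min_le_quadratic_form[OF assms(1), of v] by (simp add: distrib_right)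
  then show ?thesis
    using v by simp
qed

definition criticality :: "real^'n \<Rightarrow> real^'n^'n \<Rightarrow> real" where
  "criticality v A = max (norm v) (max (- lambda_min A) 0)"

lemma criticality_nonneg: "0 \<le> criticality v A"
  by (simp add: criticality_def)

lemma criticality_le_perturbation:
  fixes A B :: "real^'n^'n"
  assumes "transpose A = A" "transpose B = B"
  shows "criticality u B \<le> criticality v A + max (norm (v - u)) (opnorm (A - B))"
proof -
  define M where "M = criticality v A"
  define E where "E = max (norm (v - u)) (opnorm (A - B))"
  have "norm u \<le> norm v + norm (v - u)"
    by (metis norm_triangle_sub norm_minus_commute)
  also have "\<dots> \<le> M + E"
    unfolding M_def E_def criticality_def by (intro add_mono) auto
  finally have "norm u \<le> M + E" .
  moreover have "- lambda_min B \<le> - lambda_min A + opnorm (A - B)"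
    using lambda_min_le_perturbation[OF assms] by simp
  then have "- lambda_min B \<le> M + E"
    unfolding M_def E_def criticality_def by (smt (verit) max.cobounded1 max.cobounded2)
  moreover have "0 \<le> M + E"
    using criticality_nonneg[of v A] unfolding M_def E_def by (simp add: le_max_iff_disj)
  ultimately show ?thesis
    unfolding M_def E_def criticality_def by simp
qed

section \<open>Symmetry of a Lipschitz continuous Hessian\<close>

lemma has_derivative_along_line:
  fixes f :: "real^'n \<Rightarrow> real"
  assumes "\<And>y. (f has_derivative (\<lambda>h. gradf y \<bullet> h)) (at y)"
  shows "((\<lambda>t. f (p + t *\<^sub>R a)) has_derivative (\<lambda>h. gradf (p + t *\<^sub>R a) \<bullet> (h *\<^sub>R a))) (at t within S)"
proof -
  have "((\<lambda>t. p + t *\<^sub>R a) has_derivative (\<lambda>h. h *\<^sub>R a)) (at t within S)"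
    by (auto intro!: derivative_eq_intros)
  from has_derivative_compose[OF this assms] show ?thesis
    by simp
qed

text \<open>Two applications of the mean value theorem, first along \<open>a\<close> and then along \<open>b\<close>.\<close>
lemma second_difference_eq_hessian:
  fixes f :: "real^'n \<Rightarrow> real"
  assumes grad: "\<And>y. (f has_derivative (\<lambda>h. gradf y \<bullet> h)) (at y)"
    and hess: "\<And>y. (gradf has_derivative (\<lambda>h. hessf y *v h)) (at y)"
    and t: "0 < t"
  obtains z where "norm (z - p) \<le> t * (norm a + norm b)"
    and "f (p + t *\<^sub>R a + t *\<^sub>R b) - f (p + t *\<^sub>R a) - f (p + t *\<^sub>R b) + f p
       = t\<^sup>2 * (a \<bullet> (hessf z *v b))"
proof -
  define phi where "phi r = f ((p + t *\<^sub>R b) + r *\<^sub>R a) - f (p + r *\<^sub>R a)" for r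
  have "\<exists>r\<in>{0<..<t}. phi t - phi 0
      = gradf ((p + t *\<^sub>R b) + r *\<^sub>R a) \<bullet> ((t - 0) *\<^sub>R a) - gradf (p + r *\<^sub>R a) \<bullet> ((t - 0) *\<^sub>R a)"
    unfolding phi_def
    by (rule mvt_simple[OF t]) (intro has_derivative_diff has_derivative_along_line[OF grad])
  then obtain r where r: "0 < r" "r < t"
    and phi: "phi t - phi 0 = t * (gradf ((p + r *\<^sub>R a) + t *\<^sub>R b) \<bullet> a - gradf (p + r *\<^sub>R a) \<bullet> a)"
    by (auto simp: algebra_simps)
  define psi where "psi u = gradf ((p + r *\<^sub>R a) + u *\<^sub>R b) \<bullet> a" for u
  have "(psi has_derivative (\<lambda>h. (hessf ((p + r *\<^sub>R a) + u *\<^sub>R b) *v (h *\<^sub>R b)) \<bullet> a)) (at u within S)"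
    for u S
  proof -
    have "((\<lambda>u. (p + r *\<^sub>R a) + u *\<^sub>R b) has_derivative (\<lambda>h. h *\<^sub>R b)) (at u within S)"
      by (auto intro!: derivative_eq_intros)
    from has_derivative_compose[OF this hess] show ?thesis
      unfolding psi_def by (intro has_derivative_inner_left) simp
  qed
  then have "\<exists>u\<in>{0<..<t}. psi t - psi 0 = (hessf ((p + r *\<^sub>R a) + u *\<^sub>R b) *v ((t - 0) *\<^sub>R b)) \<bullet> a"
    by (intro mvt_simple[OF t])
  then obtain u where u: "0 < u" "u < t"
    and psi: "psi t - psi 0 = t * ((hessf ((p + r *\<^sub>R a) + u *\<^sub>R b) *v b) \<bullet> a)"
    by (auto simp: matrix_vector_mult_scaleR)
  define z where "z = (p + r *\<^sub>R a) + u *\<^sub>R b"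
  have "norm (z - p) \<le> norm (r *\<^sub>R a) + norm (u *\<^sub>R b)"
    unfolding z_def by (metis add_diff_cancel_left' add.assoc norm_triangle_ineq)
  also have "\<dots> \<le> t * (norm a + norm b)"
    using r u by (simp add: distrib_left add_mono mult_right_mono)
  finally have "norm (z - p) \<le> t * (norm a + norm b)" .
  moreover have "f (p + t *\<^sub>R a + t *\<^sub>R b) - f (p + t *\<^sub>R a) - f (p + t *\<^sub>R b) + f p = phi t - phi 0"
    unfolding phi_def by (simp add: algebra_simps)
  moreover have "phi t - phi 0 = t * (psi t - psi 0)"
    unfolding phi psi_def by simp
  then have "phi t - phi 0 = t\<^sup>2 * (a \<bullet> (hessf z *v b))"
    unfolding psi z_def by (simp add: power2_eq_square inner_commute)
  ultimately show ?thesis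
    using that by simp
qed

text \<open>The second difference of \<open>f\<close> in the directions \<open>u\<close> and \<open>v\<close> is symmetric in \<open>u\<close>
  and \<open>v\<close>, and by the Lipschitz bound it is \<open>t\<^sup>2 u \<bullet> (hessf y *v v)\<close> up to \<open>O(L t\<^sup>3)\<close>.\<close>
lemma hessian_asymmetry_le:
  fixes f :: "real^'n \<Rightarrow> real"
  assumes grad: "\<And>y. (f has_derivative (\<lambda>h. gradf y \<bullet> h)) (at y)"
    and hess: "\<And>y. (gradf has_derivative (\<lambda>h. hessf y *v h)) (at y)"
    and lip: "\<And>y z. opnorm (hessf y - hessf z) \<le> L * norm (y - z)"
    and t: "0 < t"
  shows "\<bar>u \<bullet> (hessf y *v v) - v \<bullet> (hessf y *v u)\<bar> \<le> 2 * \<bar>L\<bar> * t * (norm u + norm v) * norm u * norm v"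
proof -
  have near: "\<bar>a \<bullet> (hessf z *v b) - a \<bullet> (hessf y *v b)\<bar> \<le> \<bar>L\<bar> * t * (norm u + norm v) * norm a * norm b"
    if "norm (z - y) \<le> t * (norm u + norm v)" for a b z
  proof -
    have "\<bar>a \<bullet> (hessf z *v b) - a \<bullet> (hessf y *v b)\<bar> = \<bar>a \<bullet> ((hessf z - hessf y) *v b)\<bar>"
      by (simp add: matrix_vector_mult_diff_rdistrib inner_diff_right)
    also have "\<dots> \<le> opnorm (hessf z - hessf y) * norm a * norm b"
      by (rule abs_inner_matrix_vector_mult_le_opnorm)
    also have "\<dots> \<le> \<bar>L\<bar> * t * (norm u + norm v) * norm a * norm b"
    proof (intro mult_right_mono)
      have "L * norm (z - y) \<le> \<bar>L\<bar> * (t * (norm u + norm v))"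
        using that by (intro mult_mono) auto
      then show "opnorm (hessf z - hessf y) \<le> \<bar>L\<bar> * t * (norm u + norm v)"
        using lip[of z y] by (simp add: ac_simps)
    qed auto
    finally show ?thesis .
  qed
  obtain z1 where z1: "norm (z1 - y) \<le> t * (norm u + norm v)"
    and e1: "f (y + t *\<^sub>R u + t *\<^sub>R v) - f (y + t *\<^sub>R u) - f (y + t *\<^sub>R v) + f y
      = t\<^sup>2 * (u \<bullet> (hessf z1 *v v))"
    using second_difference_eq_hessian[OF grad hess t] by blast
  obtain z2 where z2: "norm (z2 - y) \<le> t * (norm v + norm u)"
    and e2: "f (y + t *\<^sub>R v + t *\<^sub>R u) - f (y + t *\<^sub>R v) - f (y + t *\<^sub>R u) + f y
      = t\<^sup>2 * (v \<bullet> (hessf z2 *v u))"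
    using second_difference_eq_hessian[OF grad hess t] by blast
  have "f (y + t *\<^sub>R v + t *\<^sub>R u) = f (y + t *\<^sub>R u + t *\<^sub>R v)"
    by (rule arg_cong[where f = f]) (simp add: algebra_simps)
  with e1 e2 have "t\<^sup>2 * (u \<bullet> (hessf z1 *v v)) = t\<^sup>2 * (v \<bullet> (hessf z2 *v u))"
    by linarith
  with t have "u \<bullet> (hessf z1 *v v) = v \<bullet> (hessf z2 *v u)"
    by simp
  with near[OF z1, of u v] near[of z2 v u] z2 show ?thesis
    by (simp add: add.commute abs_le_iff algebra_simps)
qed

lemma hessian_symmetric:
  fixes f :: "real^'n \<Rightarrow> real"
  assumes grad: "\<And>y. (f has_derivative (\<lambda>h. gradf y \<bullet> h)) (at y)"
    and hess: "\<And>y. (gradf has_derivative (\<lambda>h. hessf y *v h)) (at y)"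
    and lip: "\<And>y z. opnorm (hessf y - hessf z) \<le> L * norm (y - z)"
  shows "transpose (hessf y) = hessf y"
proof (rule symmetric_if_inner_matrix_vector_mult_commute)
  fix u v :: "real^'n"
  define C where "C = 2 * \<bar>L\<bar> * (norm u + norm v) * norm u * norm v"
  have "C \<ge> 0"
    by (simp add: C_def)
  have bound: "\<bar>u \<bullet> (hessf y *v v) - v \<bullet> (hessf y *v u)\<bar> \<le> C * t" if "0 < t" for t
  proof -
    have "2 * \<bar>L\<bar> * t * (norm u + norm v) * norm u * norm v = C * t"
      unfolding C_def by (simp add: ac_simps)
    with hessian_asymmetry_le[OF grad hess lip that, of u y v] show ?thesis
      by linarith
  qed
  have "\<bar>u \<bullet> (hessf y *v v) - v \<bullet> (hessf y *v u)\<bar> \<le> 0 + e" if "0 < e" for e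
  proof -
    have "C * (e / (C + 1)) \<le> e"
      using \<open>C \<ge> 0\<close> that by (simp add: field_simps)
    with bound[of "e / (C + 1)"] \<open>C \<ge> 0\<close> that show ?thesis
      by simp
  qed
  then have "\<bar>u \<bullet> (hessf y *v v) - v \<bullet> (hessf y *v u)\<bar> \<le> 0"
    by (rule field_le_epsilon)
  then show "u \<bullet> (hessf y *v v) = v \<bullet> (hessf y *v u)"
    by simp
qed

section \<open>Estimates for a single trust-region iteration\<close>

lemma model_error_le_decrease_gradient_case:
  fixes D Dmax G P kmf ks eta nH :: real
  assumes D: "0 < D" "D \<le> Dmax" and ks: "0 < ks" and kmf: "0 \<le> kmf" and eta: "eta < 1"
    and G: "0 < G" and nH: "0 \<le> nH" "(nH + 1) * D \<le> G"
    and accuracy: "2 * kmf * Dmax * D \<le> ks * (1 - eta) * G"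
    and P: "ks * (G * min D (G / (nH + 1))) \<le> P"
  shows "0 < P \<and> 2 * kmf * D ^ 3 \<le> (1 - eta) * P"
proof -
  have "min D (G / (nH + 1)) = D"
    using nH by (simp add: pos_le_divide_eq mult.commute)
  with P have P_ge: "ks * (G * D) \<le> P"
    by simp
  have "2 * kmf * D ^ 3 = 2 * kmf * D * D * D"
    by (simp add: power3_eq_cube)
  also have "\<dots> \<le> 2 * kmf * Dmax * D * D"
    using D kmf by (intro mult_right_mono mult_left_mono) auto
  also have "\<dots> \<le> ks * (1 - eta) * G * D"
    using accuracy D by (intro mult_right_mono) auto
  also have "\<dots> = (1 - eta) * (ks * (G * D))"
    by (simp add: ac_simps)
  also have "\<dots> \<le> (1 - eta) * P"
    using P_ge eta by (intro mult_left_mono) auto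
  finally show ?thesis
    using P_ge G D ks by (simp add: order_less_le_trans[OF _ P_ge])
qed

lemma model_error_le_decrease_curvature_case:
  fixes D T P kmf ks eta :: real
  assumes D: "0 < D" and ks: "0 < ks" and eta: "eta < 1" and T: "0 < T"
    and accuracy: "2 * kmf * D \<le> ks * (1 - eta) * T"
    and P: "ks * (T * D\<^sup>2) \<le> P"
  shows "0 < P \<and> 2 * kmf * D ^ 3 \<le> (1 - eta) * P"
proof -
  have "2 * kmf * D ^ 3 = 2 * kmf * D * D\<^sup>2"
    by (simp add: power3_eq_cube power2_eq_square)
  also have "\<dots> \<le> ks * (1 - eta) * T * D\<^sup>2"
    using accuracy by (intro mult_right_mono) auto
  also have "\<dots> = (1 - eta) * (ks * (T * D\<^sup>2))"
    by (simp add: ac_simps)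
  also have "\<dots> \<le> (1 - eta) * P"
    using P eta by (intro mult_left_mono) auto
  finally show ?thesis
    using P T D ks by (simp add: order_less_le_trans[OF _ P])
qed

lemma model_decrease_dominates_model_error:
  fixes D Dmax G T nH kH P kmf ks eta :: real
  assumes D: "0 < D" "D \<le> Dmax" and ks: "0 < ks" and kmf: "0 \<le> kmf" and eta: "eta < 1"
    and nH: "0 \<le> nH" "nH + 1 \<le> kH" and G: "0 \<le> G" and T: "0 \<le> T"
    and pos: "0 < max G T"
    and P: "ks * max (G * min D (G / (nH + 1))) (T * D\<^sup>2) \<le> P"
    and grad_case: "2 * kmf * Dmax / (ks * (1 - eta)) * D \<le> max G T" "kH * D \<le> max G T"
    and curv_case: "2 * kmf / (ks * (1 - eta)) * D \<le> max G T"
  shows "0 < P \<and> 2 * kmf * D ^ 3 \<le> (1 - eta) * P"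
proof -
  have kse: "0 < ks * (1 - eta)"
    using ks eta by simp
  have P_ge: "ks * (G * min D (G / (nH + 1))) \<le> P" "ks * (T * D\<^sup>2) \<le> P"
    using P ks by (smt (verit) max.cobounded1 max.cobounded2 mult_left_mono)+
  show ?thesis
  proof (cases "T \<le> G")
    case True
    have "(nH + 1) * D \<le> kH * D"
      using nH D by (intro mult_right_mono) auto
    with True grad_case(2) have "(nH + 1) * D \<le> G"
      by simp
    moreover have "2 * kmf * Dmax * D \<le> ks * (1 - eta) * G"
      using True grad_case(1) kse by (simp add: pos_divide_le_eq mult.commute)
    ultimately show ?thesis
      using True D ks kmf eta nH pos P_ge(1) by (intro model_error_le_decrease_gradient_case) auto
  next
    case False
    then have "2 * kmf * D \<le> ks * (1 - eta) * T"
      using curv_case kse by (simp add: pos_divide_le_eq mult.commute)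
    then show ?thesis
      using False D ks eta pos P_ge(2) by (intro model_error_le_decrease_curvature_case) auto
  qed
qed

lemma ratio_ge_if_model_error_small:
  fixes P A eta :: real
  assumes "0 < P" "\<bar>P - A\<bar> \<le> (1 - eta) * P"
  shows "eta \<le> A / P"
  using assms by (simp add: pos_le_divide_eq algebra_simps abs_le_iff)

lemma model_decrease_ge_criticality:
  fixes D Dm G T nH kH P ks e :: real
  assumes Dm: "0 < Dm" "Dm \<le> D" "Dm \<le> e / kH" and e: "0 < e" "e \<le> max G T"
    and nH: "0 \<le> nH" "nH + 1 \<le> kH" and G: "0 \<le> G" and T: "0 \<le> T" and ks: "0 \<le> ks"
    and P: "ks * max (G * min D (G / (nH + 1))) (T * D\<^sup>2) \<le> P"
  shows "ks * e * min Dm (Dm\<^sup>2) \<le> P"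
proof -
  have "e * min Dm (Dm\<^sup>2) \<le> max (G * min D (G / (nH + 1))) (T * D\<^sup>2)"
  proof (cases "T \<le> G")
    case True
    have "e / kH \<le> G / (nH + 1)"
      using True e nH by (intro frac_le) auto
    then have "Dm \<le> min D (G / (nH + 1))"
      using Dm by simp
    then have "e * Dm \<le> G * min D (G / (nH + 1))"
      using True e Dm by (intro mult_mono) auto
    then show ?thesis
      using e by (smt (verit) max.cobounded1 min.cobounded1 mult_left_mono)
  next
    case False
    have "e * Dm\<^sup>2 \<le> T * D\<^sup>2"
      using False e Dm by (intro mult_mono power_mono) auto
    then show ?thesis
      using e by (smt (verit) max.cobounded2 min.cobounded2 mult_left_mono)
  qed
  then show ?thesis
    using ks P by (smt (verit) mult.assoc mult_left_mono)
qed

section \<open>Counting iterations\<close>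

lemma trust_region_radius_lower_bound:
  fixes Delta :: "nat \<Rightarrow> real" and successful :: "nat \<Rightarrow> bool"
  assumes "Dmin \<le> Delta 0" "Dmin \<le> gamma * R" "0 \<le> gamma"
    and successful: "\<And>k. k < K \<Longrightarrow> successful k \<Longrightarrow> Delta k \<le> Delta (Suc k)"
    and unsuccessful: "\<And>k. k < K \<Longrightarrow> \<not> successful k \<Longrightarrow> Delta (Suc k) = gamma * Delta k"
    and small_successful: "\<And>k. k < K \<Longrightarrow> Delta k \<le> R \<Longrightarrow> successful k"
  shows "k \<le> K \<Longrightarrow> Dmin \<le> Delta k"
proof (induction k)
  case (Suc k)
  show ?case
  proof (cases "successful k")
    case True
    with Suc successful[of k] show ?thesis
      by simp
  next
    case False
    with Suc small_successful[of k] have "R \<le> Delta k"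
      by fastforce
    with \<open>0 \<le> gamma\<close> have "gamma * R \<le> gamma * Delta k"
      by (rule mult_left_mono[rotated])
    with False Suc unsuccessful[of k] \<open>Dmin \<le> gamma * R\<close> show ?thesis
      by simp
  qed
qed (use assms in simp)

lemma iteration_count_le:
  fixes S U :: nat
  assumes D0: "0 < D0" and Dmin: "0 < Dmin"
    and gamma: "0 < gamma_dec" "gamma_dec < 1" "1 < gamma_inc" and d: "0 < d"
    and radius: "Dmin \<le> D0 * gamma_inc ^ S * gamma_dec ^ U"
    and decrease: "real S * d \<le> M"
  shows "real (S + U) \<le> ln (D0 / Dmin) / ln (1 / gamma_dec)
    + (1 + ln gamma_inc / ln (1 / gamma_dec)) * (M / d)"
proof -
  define l where "l = ln (1 / gamma_dec)"
  have l: "0 < l" "ln gamma_dec = - l"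
    using gamma by (simp_all add: l_def ln_div)
  have "ln Dmin \<le> ln (D0 * gamma_inc ^ S * gamma_dec ^ U)"
    using radius Dmin by simp
  also have "\<dots> = ln D0 + S * ln gamma_inc - U * l"
    using D0 gamma l by (simp add: ln_mult ln_realpow)
  finally have "U * l \<le> ln (D0 / Dmin) + S * ln gamma_inc"
    using D0 Dmin by (simp add: ln_div)
  then have U: "U \<le> ln (D0 / Dmin) / l + S * (ln gamma_inc / l)"
    using l by (simp add: pos_le_divide_eq add_divide_distrib[symmetric])
  have S: "S \<le> M / d"
    using decrease d by (simp add: field_simps)
  have "real (S + U) \<le> ln (D0 / Dmin) / l + S * (1 + ln gamma_inc / l)"
    using U by (simp add: algebra_simps)
  also have "\<dots> \<le> ln (D0 / Dmin) / l + M / d * (1 + ln gamma_inc / l)"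
    using S l gamma by (intro add_left_mono mult_right_mono) auto
  finally show ?thesis
    by (simp add: l_def ac_simps)
qed

text \<open>Every unsuccessful iteration shrinks the radius by \<open>gamma_dec\<close> and every successful one
  grows it by at most \<open>gamma_inc\<close>; as the radius stays above \<open>Dmin\<close>, the unsuccessful
  iterations are bounded by the successful ones, which are bounded by the total decrease.\<close>
lemma trust_region_iteration_count:
  fixes Delta phi :: "nat \<Rightarrow> real" and successful :: "nat \<Rightarrow> bool"
  assumes Delta0: "0 < Delta 0" and Dmin: "0 < Dmin" "Dmin \<le> Delta K"
    and gamma: "0 < gamma_dec" "gamma_dec < 1" "1 < gamma_inc" and d: "0 < d"
    and successful: "\<And>k. k < K \<Longrightarrow> successful k \<Longrightarrow>
      Delta (Suc k) \<le> gamma_inc * Delta k \<and> phi (Suc k) \<le> phi k - d"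
    and unsuccessful: "\<And>k. k < K \<Longrightarrow> \<not> successful k \<Longrightarrow>
      Delta (Suc k) = gamma_dec * Delta k \<and> phi (Suc k) = phi k"
    and bounded: "flow \<le> phi K"
  shows "real K \<le> ln (Delta 0 / Dmin) / ln (1 / gamma_dec)
    + (1 + ln gamma_inc / ln (1 / gamma_dec)) * ((phi 0 - flow) / d)"
proof -
  define S where "S n = (\<Sum>k<n. of_bool (successful k) :: nat)" for n
  define U where "U n = (\<Sum>k<n. of_bool (\<not> successful k) :: nat)" for n
  have "n \<le> K \<Longrightarrow> Delta n \<le> Delta 0 * gamma_inc ^ S n * gamma_dec ^ U n \<and> phi n \<le> phi 0 - S n * d"
    for n
  proof (induction n)
    case (Suc n)
    then have IH: "Delta n \<le> Delta 0 * gamma_inc ^ S n * gamma_dec ^ U n" "phi n \<le> phi 0 - S n * d"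
      and "n < K"
      by auto
    show ?case
    proof (cases "successful n")
      case True
      have "gamma_inc * Delta n \<le> gamma_inc * (Delta 0 * gamma_inc ^ S n * gamma_dec ^ U n)"
        using IH gamma by simp
      with True IH successful[OF \<open>n < K\<close>] show ?thesis
        by (auto simp: S_def U_def algebra_simps)
    next
      case False
      have "gamma_dec * Delta n \<le> gamma_dec * (Delta 0 * gamma_inc ^ S n * gamma_dec ^ U n)"
        using IH gamma by simp
      with False IH unsuccessful[OF \<open>n < K\<close>] show ?thesis
        by (auto simp: S_def U_def algebra_simps)
    qed
  qed (simp add: S_def U_def)
  then have "Dmin \<le> Delta 0 * gamma_inc ^ S K * gamma_dec ^ U K" "real (S K) * d \<le> phi 0 - flow"
    using Dmin bounded by force+
  moreover have "S K + U K = K"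
    by (induction K) (simp_all add: S_def U_def)
  ultimately show ?thesis
    using iteration_count_le[OF Delta0 Dmin(1) gamma d] by metis
qed

text \<open>Only the accuracy of \<open>m k\<close> at \<open>x k\<close> and at the trial point \<open>x k + s k\<close> enters the
  analysis, so the models need not be quadratic.\<close>
locale trust_region_run =
  fixes f :: "real^'n \<Rightarrow> real" and gradf :: "real^'n \<Rightarrow> real^'n"
    and hessf :: "real^'n \<Rightarrow> real^'n^'n" and L :: real
    and x s g :: "nat \<Rightarrow> real^'n" and m :: "nat \<Rightarrow> real^'n \<Rightarrow> real"
    and Delta :: "nat \<Rightarrow> real" and H :: "nat \<Rightarrow> real^'n^'n"
    and Delta_max gamma_dec gamma_inc eta_U eta_S mu_c kmf kmg kmh kH ks :: real
  assumes grad: "\<And>y. (f has_derivative (\<lambda>h. gradf y \<bullet> h)) (at y)"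
    and hess: "\<And>y. (gradf has_derivative (\<lambda>h. hessf y *v h)) (at y)"
    and hess_lip: "\<And>y z. opnorm (hessf y - hessf z) \<le> L * norm (y - z)"
    and Delta_0: "0 < Delta 0" "Delta 0 \<le> Delta_max"
    and gamma: "0 < gamma_dec" "gamma_dec < 1" "1 < gamma_inc"
    and eta: "0 < eta_U" "eta_U \<le> eta_S" "eta_S < 1"
    and mu_c: "0 < mu_c"
    and kappa: "0 < kmf" "0 < kmg" "0 < kmh" "0 < ks"
    and H_sym: "\<And>k. transpose (H k) = H k"
    and fully_quadratic: "\<And>k. fully_quadratic (m k) (\<lambda>y. g k + H k *v (y - x k)) (\<lambda>y. H k)
      f gradf hessf (x k) (Delta k) kmf kmg kmh"
    and H_bound: "\<And>k. opnorm (H k) \<le> kH - 1"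
    and step: "\<And>k. norm (s k) \<le> Delta k"
    and decrease: "\<And>k. ks * max (norm (g k) * min (Delta k) (norm (g k) / (opnorm (H k) + 1)))
      (max (- lambda_min (H k)) 0 * (Delta k)\<^sup>2) \<le> m k (x k) - m k (x k + s k)"
    and update: "\<And>k.
       let rho = (f (x k) - f (x k + s k)) / (m k (x k) - m k (x k + s k));
           sigm = criticality (g k) (H k)
       in if rho \<ge> eta_S \<and> sigm \<ge> mu_c * Delta k then
            x (Suc k) = x k + s k \<and> Delta (Suc k) = min (gamma_inc * Delta k) Delta_max
          else if eta_U \<le> rho \<and> rho < eta_S \<and> sigm \<ge> mu_c * Delta k then
            x (Suc k) = x k + s k \<and> Delta (Suc k) = Delta k
          else
            x (Suc k) = x k \<and> Delta (Suc k) = gamma_dec * Delta k"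
begin

definition model_decrease :: "nat \<Rightarrow> real" where
  "model_decrease k = m k (x k) - m k (x k + s k)"

definition actual_decrease :: "nat \<Rightarrow> real" where
  "actual_decrease k = f (x k) - f (x k + s k)"

definition successful :: "nat \<Rightarrow> bool" where
  "successful k \<longleftrightarrow>
     eta_U \<le> actual_decrease k / model_decrease k \<and> mu_c * Delta k \<le> criticality (g k) (H k)"

definition kappa_sigma :: real where
  "kappa_sigma = max (kmg * Delta_max) kmh"

text \<open>An iteration with \<open>Delta k\<close> below \<open>eps / (kappa_grad + kappa_sigma)\<close> and
  \<open>eps / (kappa_curv + kappa_sigma)\<close> is very successful; the two constants serve the cases
  where the model criticality is attained by the gradient and by the curvature.\<close>
definition kappa_grad :: real where
  "kappa_grad = max (max (2 * kmf * Delta_max / (ks * (1 - eta_S))) kH) mu_c"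

definition kappa_curv :: real where
  "kappa_curv = max (2 * kmf / (ks * (1 - eta_S))) mu_c"

definition Delta_min :: "real \<Rightarrow> real" where
  "Delta_min eps = min (min (Delta 0) (gamma_dec * eps / (kappa_grad + kappa_sigma)))
     (min (gamma_dec * eps / (kappa_curv + kappa_sigma)) (eps / ((1 + kappa_sigma / mu_c) * kH)))"

lemma kappa_sigma_pos: "0 < kappa_sigma"
  using kappa by (simp add: kappa_sigma_def less_max_iff_disj)

lemma iteration_cases:
  "successful k \<and> x (Suc k) = x k + s k \<and>
      (Delta (Suc k) = min (gamma_inc * Delta k) Delta_max \<or> Delta (Suc k) = Delta k)
   \<or> \<not> successful k \<and> x (Suc k) = x k \<and> Delta (Suc k) = gamma_dec * Delta k"
  using update[of k] eta(2)
  unfolding successful_def actual_decrease_def model_decrease_def Let_def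
  by (auto split: if_splits)

lemma radius_bounds: "0 < Delta k \<and> Delta k \<le> Delta_max"
proof (induction k)
  case (Suc k)
  have "gamma_dec * Delta k \<le> Delta k"
    using Suc gamma by (simp add: mult_le_cancel_right1)
  then have "gamma_dec * Delta k \<le> Delta_max"
    using Suc by linarith
  with Suc gamma iteration_cases[of k] Delta_0 show ?case
    by auto
qed (use Delta_0 in simp)

lemma successful_step:
  assumes "successful k"
  shows "x (Suc k) = x k + s k \<and> Delta k \<le> Delta (Suc k) \<and> Delta (Suc k) \<le> gamma_inc * Delta k"
proof -
  have "Delta k \<le> gamma_inc * Delta k"
    using radius_bounds[of k] gamma by simp
  with assms iteration_cases[of k] radius_bounds[of k] show ?thesis
    by auto
qed

lemma unsuccessful_step: "\<not> successful k \<Longrightarrow> x (Suc k) = x k \<and> Delta (Suc k) = gamma_dec * Delta k"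
  using iteration_cases[of k] by auto

lemma model_error_le: "\<bar>model_decrease k - actual_decrease k\<bar> \<le> 2 * kmf * Delta k ^ 3"
proof -
  have error: "\<bar>m k y - f y\<bar> \<le> kmf * Delta k ^ 3" if "y \<in> cball (x k) (Delta k)" for y
    using fully_quadratic[of k] that unfolding fully_quadratic_def by blast
  have "x k \<in> cball (x k) (Delta k)" "x k + s k \<in> cball (x k) (Delta k)"
    using radius_bounds[of k] step[of k] by (auto simp: dist_norm)
  with error[of "x k"] error[of "x k + s k"] show ?thesis
    unfolding model_decrease_def actual_decrease_def by (simp add: abs_le_iff)
qed

lemma criticality_le_model_criticality:
  "criticality (gradf (x k)) (hessf (x k)) \<le> criticality (g k) (H k) + kappa_sigma * Delta k"
proof -
  have Delta: "0 < Delta k" "Delta k \<le> Delta_max"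
    using radius_bounds[of k] by auto
  have "x k \<in> cball (x k) (Delta k)"
    using Delta by simp
  with fully_quadratic[of k]
  have "norm (g k + H k *v (x k - x k) - gradf (x k)) \<le> kmg * (Delta k)\<^sup>2"
    "opnorm (H k - hessf (x k)) \<le> kmh * Delta k"
    unfolding fully_quadratic_def by blast+
  then have "norm (g k - gradf (x k)) \<le> kmg * Delta k * Delta k" "opnorm (H k - hessf (x k)) \<le> kmh * Delta k"
    by (simp_all add: power2_eq_square mult.assoc)
  moreover have "kmg * Delta k * Delta k \<le> kappa_sigma * Delta k" "kmh * Delta k \<le> kappa_sigma * Delta k"
    using Delta kappa unfolding kappa_sigma_def
    by (auto intro!: mult_right_mono simp: le_max_iff_disj)
  ultimately have "max (norm (g k - gradf (x k))) (opnorm (H k - hessf (x k))) \<le> kappa_sigma * Delta k"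
    by simp
  then show ?thesis
    using criticality_le_perturbation[OF H_sym[of k] hessian_symmetric[OF grad hess hess_lip, of "x k"],
        of "gradf (x k)" "g k"]
    by linarith
qed

lemma kH_ge_1: "1 \<le> kH"
  using H_bound[of 0] opnorm_nonneg[of "H 0"] by linarith

context
  fixes eps :: real and K :: nat
  assumes eps_pos: "0 < eps"
    and noncritical: "\<And>k. k < K \<Longrightarrow> eps \<le> criticality (gradf (x k)) (hessf (x k))"
begin

lemma model_criticality_ge: "k < K \<Longrightarrow> eps \<le> criticality (g k) (H k) + kappa_sigma * Delta k"
  using noncritical criticality_le_model_criticality order_trans by blast

lemma successful_if_radius_small:
  assumes k: "k < K"
    and small: "Delta k \<le> eps / (kappa_grad + kappa_sigma)" "Delta k \<le> eps / (kappa_curv + kappa_sigma)"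
  shows "successful k"
proof -
  define G where "G = norm (g k)"
  define T where "T = max (- lambda_min (H k)) 0"
  have crit: "criticality (g k) (H k) = max G T"
    by (simp add: criticality_def G_def T_def)
  have Delta: "0 < Delta k" "Delta k \<le> Delta_max"
    using radius_bounds by auto
  have "0 < kappa_grad + kappa_sigma" "0 < kappa_curv + kappa_sigma"
    using mu_c kappa_sigma_pos
    by (simp_all add: kappa_grad_def kappa_curv_def less_max_iff_disj add_pos_pos)
  with small model_criticality_ge[OF k]
  have "kappa_grad * Delta k \<le> max G T" "kappa_curv * Delta k \<le> max G T"
    by (simp_all add: crit pos_le_divide_eq algebra_simps)
  then have grad_case: "2 * kmf * Delta_max / (ks * (1 - eta_S)) * Delta k \<le> max G T"
      "kH * Delta k \<le> max G T" "mu_c * Delta k \<le> max G T"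
    and curv_case: "2 * kmf / (ks * (1 - eta_S)) * Delta k \<le> max G T"
    using Delta unfolding kappa_grad_def kappa_curv_def
    by (meson max.cobounded1 max.cobounded2 mult_right_mono less_imp_le order_trans)+
  have "0 < max G T"
    using grad_case(3) mu_c Delta by (smt (verit) mult_pos_pos)
  have "0 < model_decrease k \<and> 2 * kmf * Delta k ^ 3 \<le> (1 - eta_S) * model_decrease k"
    using H_bound[of k] decrease[of k] opnorm_nonneg[of "H k"] kappa eta Delta
    by (intro model_decrease_dominates_model_error[OF _ _ _ _ _ _ _ _ _ \<open>0 < max G T\<close> _
          grad_case(1,2) curv_case])
      (auto simp: G_def T_def model_decrease_def)
  with model_error_le[of k] have "eta_S \<le> actual_decrease k / model_decrease k"
    by (intro ratio_ge_if_model_error_small) auto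
  with eta grad_case(3) show ?thesis
    unfolding successful_def crit by simp
qed

lemma Delta_min_pos: "0 < Delta_min eps"
  using Delta_0 gamma eps_pos mu_c kappa_sigma_pos kH_ge_1
  by (simp add: Delta_min_def kappa_grad_def kappa_curv_def less_max_iff_disj add_pos_pos)

lemma Delta_min_le_radius: "k \<le> K \<Longrightarrow> Delta_min eps \<le> Delta k"
proof (rule trust_region_radius_lower_bound[where successful = successful and gamma = gamma_dec])
  show "Delta_min eps \<le> Delta 0"
    by (simp add: Delta_min_def)
  show "Delta_min eps \<le> gamma_dec *
      min (eps / (kappa_grad + kappa_sigma)) (eps / (kappa_curv + kappa_sigma))"
    using gamma by (simp add: Delta_min_def min_mult_distrib_left min_le_iff_disj)
qed (use gamma successful_step unsuccessful_step successful_if_radius_small in auto)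

lemma successful_decrease:
  assumes k: "k < K" and "successful k"
  shows "f (x (Suc k)) \<le> f (x k) -
    eta_U * ks * min (eps * Delta_min eps) (eps * Delta_min eps ^ 2) / (1 + kappa_sigma / mu_c)"
proof -
  define e where "e = eps / (1 + kappa_sigma / mu_c)"
  have q: "0 < 1 + kappa_sigma / mu_c"
    using kappa_sigma_pos mu_c by (simp add: add_pos_pos)
  have model: "mu_c * Delta k \<le> criticality (g k) (H k)"
    and ratio: "eta_U \<le> actual_decrease k / model_decrease k"
    using \<open>successful k\<close> by (auto simp: successful_def)
  have "kappa_sigma * Delta k \<le> kappa_sigma / mu_c * criticality (g k) (H k)"
    using model mu_c kappa_sigma_pos by (simp add: field_simps mult_left_mono)
  with model_criticality_ge[OF k] have "eps \<le> criticality (g k) (H k) * (1 + kappa_sigma / mu_c)"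
    by (simp add: algebra_simps)
  then have "e \<le> criticality (g k) (H k)"
    using q by (simp add: e_def pos_divide_le_eq)
  moreover have "Delta_min eps \<le> e / kH"
    by (simp add: Delta_min_def e_def divide_divide_eq_left)
  ultimately have lower: "ks * e * min (Delta_min eps) (Delta_min eps ^ 2) \<le> model_decrease k"
    using Delta_min_pos Delta_min_le_radius[of k] k eps_pos q H_bound[of k] opnorm_nonneg[of "H k"]
      decrease[of k] kappa
    by (intro model_decrease_ge_criticality[where G = "norm (g k)" and T = "max (- lambda_min (H k)) 0"])
      (auto simp: e_def criticality_def model_decrease_def)
  moreover have "0 < ks * e * min (Delta_min eps) (Delta_min eps ^ 2)"
    using kappa eps_pos q Delta_min_pos by (simp add: e_def)
  ultimately have "eta_U * (ks * e * min (Delta_min eps) (Delta_min eps ^ 2)) \<le> actual_decrease k"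
    using ratio eta by (smt (verit) mult_left_mono pos_le_divide_eq)
  moreover have "eta_U * (ks * e * min (Delta_min eps) (Delta_min eps ^ 2))
      = eta_U * ks * min (eps * Delta_min eps) (eps * Delta_min eps ^ 2) / (1 + kappa_sigma / mu_c)"
  proof -
    have "min (eps * Delta_min eps) (eps * Delta_min eps ^ 2) = eps * min (Delta_min eps) (Delta_min eps ^ 2)"
      using eps_pos by (simp add: min_mult_distrib_left)
    then show ?thesis
      by (simp add: e_def)
  qed
  ultimately show ?thesis
    using successful_step[OF \<open>successful k\<close>] by (simp add: actual_decrease_def)
qed

theorem iteration_complexity:
  assumes bounded_below: "\<And>y. flow \<le> f y"
  shows "real K \<le> ln (Delta 0 / Delta_min eps) / ln (1 / gamma_dec)
    + (1 + ln gamma_inc / ln (1 / gamma_dec)) *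
      ((1 + kappa_sigma / mu_c) * (f (x 0) - flow) /
       (eta_U * ks * min (eps * Delta_min eps) (eps * Delta_min eps ^ 2)))"
proof -
  define d where
    "d = eta_U * ks * min (eps * Delta_min eps) (eps * Delta_min eps ^ 2) / (1 + kappa_sigma / mu_c)"
  have q: "0 < 1 + kappa_sigma / mu_c"
    using kappa_sigma_pos mu_c by (simp add: add_pos_pos)
  have "0 < d"
    using eta kappa eps_pos q Delta_min_pos by (simp add: d_def)
  have "real K \<le> ln (Delta 0 / Delta_min eps) / ln (1 / gamma_dec)
      + (1 + ln gamma_inc / ln (1 / gamma_dec)) * ((f (x 0) - flow) / d)"
    using Delta_0 Delta_min_pos Delta_min_le_radius[of K] gamma \<open>0 < d\<close> bounded_below
      successful_step unsuccessful_step successful_decrease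
    by (intro trust_region_iteration_count[where successful = successful and phi = "\<lambda>k. f (x k)"])
      (auto simp: d_def)
  moreover have "(f (x 0) - flow) / d = (1 + kappa_sigma / mu_c) * (f (x 0) - flow) /
      (eta_U * ks * min (eps * Delta_min eps) (eps * Delta_min eps ^ 2))"
    by (simp add: d_def)
  ultimately show ?thesis
    by simp
qed

end

end

theorem theorem4p15:
  fixes f :: "real^'n \<Rightarrow> real"
    and gradf :: "real^'n \<Rightarrow> real^'n"
    and hessf :: "real^'n \<Rightarrow> real^'n^'n"
    and flow L :: real
    and x s g :: "nat \<Rightarrow> real^'n"
    and c Delta :: "nat \<Rightarrow> real"
    and H :: "nat \<Rightarrow> real^'n^'n"
    and Delta_max gamma_dec gamma_inc eta_U eta_S mu_c :: real
    and kmf kmg kmh kH ks eps :: real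
    and K :: nat
  assumes f_low: "\<And>y. f y \<ge> flow"
    and grad: "\<And>y. (f has_derivative (\<lambda>h. gradf y \<bullet> h)) (at y)"
    and hess: "\<And>y. (gradf has_derivative (\<lambda>h. hessf y *v h)) (at y)"
    and hess_cont: "continuous_on UNIV hessf"
    and hess_lip: "\<And>y z. opnorm (hessf y - hessf z) \<le> L * norm (y - z)"
    and Delta0: "Delta 0 > 0" and Dmax: "Delta_max \<ge> Delta 0"
    and gdec: "0 < gamma_dec" "gamma_dec < 1" and ginc: "1 < gamma_inc"
    and eta: "0 < eta_U" "eta_U \<le> eta_S" "eta_S < 1"
    and muc: "mu_c > 0"
    and kpos: "kmf > 0" "kmg > 0" "kmh > 0"
    and kH: "kH \<ge> 1"
    and ks: "0 < ks" "ks < 1/2"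
    and Hsym: "\<And>k. transpose (H k) = H k"
    and fq: "\<And>k. fully_quadratic
                 (\<lambda>y. c k + g k \<bullet> (y - x k) + 1/2 * ((y - x k) \<bullet> (H k *v (y - x k))))
                 (\<lambda>y. g k + H k *v (y - x k)) (\<lambda>y. H k)
                 f gradf hessf (x k) (Delta k) kmf kmg kmh"
    and Hbd: "\<And>k. opnorm (H k) \<le> kH - 1"
    and step: "\<And>k. norm (s k) \<le> Delta k"
    and decrease: "\<And>k.
       (let m = (\<lambda>y. c k + g k \<bullet> (y - x k) + 1/2 * ((y - x k) \<bullet> (H k *v (y - x k))))
        in m (x k) - m (x k + s k) \<ge>
           ks * max (norm (g k) * min (Delta k) (norm (g k) / (opnorm (H k) + 1)))
                    (max (- lambda_min (H k)) 0 * (Delta k)^2))"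
    and iter: "\<And>k.
       (let m = (\<lambda>y. c k + g k \<bullet> (y - x k) + 1/2 * ((y - x k) \<bullet> (H k *v (y - x k))));
            rho = (f (x k) - f (x k + s k)) / (m (x k) - m (x k + s k));
            sigm = max (norm (g k)) (max (- lambda_min (H k)) 0)
        in (if rho \<ge> eta_S \<and> sigm \<ge> mu_c * Delta k then
              x (Suc k) = x k + s k \<and> Delta (Suc k) = min (gamma_inc * Delta k) Delta_max
            else if eta_U \<le> rho \<and> rho < eta_S \<and> sigm \<ge> mu_c * Delta k then
              x (Suc k) = x k + s k \<and> Delta (Suc k) = Delta k
            else
              x (Suc k) = x k \<and> Delta (Suc k) = gamma_dec * Delta k))"
    and eps: "eps > 0"
    and crit: "\<And>k. k < K \<Longrightarrow>
       max (norm (gradf (x k))) (max (- lambda_min (hessf (x k))) 0) \<ge> eps"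
  shows
    "(let ksig = max (kmg * Delta_max) kmh;
          Dmin = min (min (Delta 0)
                   (gamma_dec * eps /
                      (max (max (2 * kmf * Delta_max / (ks * (1 - eta_S))) kH) mu_c + ksig)))
                 (min (gamma_dec * eps / (max (2 * kmf / (ks * (1 - eta_S))) mu_c + ksig))
                   (eps / ((1 + ksig / mu_c) * kH)))
      in real K \<le> ln (Delta 0 / Dmin) / ln (1 / gamma_dec)
         + (1 + ln gamma_inc / ln (1 / gamma_dec)) *
           ((1 + ksig / mu_c) * (f (x 0) - flow) /
            (eta_U * ks * min (eps * Dmin) (eps * Dmin ^ 2))))"
proof -
  interpret trust_region_run f gradf hessf L x s g
    "\<lambda>k y. c k + g k \<bullet> (y - x k) + 1/2 * ((y - x k) \<bullet> (H k *v (y - x k)))"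
    Delta H Delta_max gamma_dec gamma_inc eta_U eta_S mu_c kmf kmg kmh kH ks
    by unfold_locales
      (use grad hess hess_lip Delta0 Dmax gdec ginc eta muc kpos ks(1) Hsym fq Hbd step decrease iter
        in \<open>simp_all only: Let_def criticality_def\<close>)
  from iteration_complexity[OF eps crit[folded criticality_def] f_low] show ?thesis
    unfolding Let_def Delta_min_def kappa_grad_def kappa_curv_def kappa_sigma_def .
qed

end
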